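(* Let $A=\mathbb{F}_q[t]$ and let $f_1,\ldots,f_r,g\in A$ be non-constant. Let $f$ be a polynomial function from $A/f_1A\times\cdots\times A/f_rA$ to $A/gA$. Then $f$ is represented by exactly one polynomial of the form $$F=\sum_{\mathbf{k}}b_{\mathbf{k}}(\mathbf{x})_{\mathbf{k}},$$ where the sum is over all $\mathbf{k}=(k_1,\ldots,k_r)\in\mathbb{N}^r$ with $0\le k_i<\mu(f_i,g)$ for each $i$, and the coefficients $b_{\mathbf{k}}\in A$ satisfy $b_{\mathbf{k}}=0$ or $$\deg b_{\mathbf{k}}<\deg\frac{g}{\gcd\!\Big(g,\prod_{i=1}^r\prod_{j=0}^{k_i-1}(a_{k_i}-a_j)\Big)}.$$
   Context: Write $\mathbb{F}_q=\{a_0=0,a_1,\ldots,a_{q-1}\}$. For $k\in\mathbb{N}$ with base-$q$ expansion $k=c_0+c_1q+\cdots+c_hq^h$ ($0\le c_s<q$), define $a_k=a_{c_0}+a_{c_1}t+\cdots+a_{c_h}t^h\in A$. Thus $\{a_0,\ldots,a_{q^d-1}\}$ is the set of polynomials of degree $<d$. For each $i$, $A/f_iA$ is identified with the complete residue system $\{a_0,\ldots,a_{q^{\deg f_i}-1}\}$ (polynomials of degree $<\deg f_i$). A function $f$ from $A/f_1A\times\cdots\times A/f_rA$ to $A/gA$ is a polynomial function (and $F\in A[x_1,\ldots,x_r]$ represents it) if $F(b_1,\ldots,b_r)\equiv f(b_1,\ldots,b_r)\pmod g$ for all $(b_1,\ldots,b_r)$ with $\deg b_i<\deg f_i$ (i.e.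 $b_i\in\{a_0,\ldots,a_{q^{\deg f_i}-1}\}$) for each $i$. For $\mathbf{k}\in\mathbb{N}^r$, $(\mathbf{x})_{\mathbf{k}}=\prod_{i=1}^r(x_i-a_0)(x_i-a_1)\cdots(x_i-a_{k_i-1})$ (empty product $=1$). $\lambda(g)$ is the smallest positive integer $k$ such that $g\mid\prod_{j=0}^{k-1}(a_k-a_j)$, and $\mu(f_i,g)=\min(q^{\deg f_i},\lambda(g))$. *)

theory Defs
  imports "HOL-Computational_Algebra.Polynomial_Factorial" "HOL-Computational_Algebra.Euclidean_Algorithm" "HOL-Library.Poly_Mapping"
begin

text \<open>Multivariate polynomials over A = F_q[t] in variables x_0, x_1, ... (indexed by nat),
  represented as finitely supported maps from monomials (exponent vectors) to coefficients.\<close>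

type_synonym 'a mpoly = "(nat \<Rightarrow>\<^sub>0 nat) \<Rightarrow>\<^sub>0 'a poly"

definition mvar :: "nat \<Rightarrow> 'a::comm_ring_1 mpoly" where
  "mvar i = Poly_Mapping.single (Poly_Mapping.single i 1) 1"

definition mconst :: "'a::comm_ring_1 poly \<Rightarrow> 'a mpoly" where
  "mconst c = Poly_Mapping.single 0 c"

definition mvars :: "'a::comm_ring_1 mpoly \<Rightarrow> nat set" where
  "mvars F = \<Union> (Poly_Mapping.keys ` Poly_Mapping.keys F)"

definition meval :: "'a::comm_ring_1 mpoly \<Rightarrow> (nat \<Rightarrow> 'a poly) \<Rightarrow> 'a poly" where
  "meval F v = (\<Sum>m\<in>Poly_Mapping.keys F.
      Poly_Mapping.lookup F m * (\<Prod>i\<in>Poly_Mapping.keys m. v i ^ Poly_Mapping.lookup m i))"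

text \<open>The enumeration a_k of A: e enumerates F_q with e 0 = 0, q = card (UNIV :: 'a set), and
  a_k = e(c_0) + e(c_1) t + ... for the base-q digits c_s of k.\<close>

definition aseq :: "(nat \<Rightarrow> 'a::{field,finite}) \<Rightarrow> nat \<Rightarrow> 'a poly" where
  "aseq e k = (\<Sum>s\<le>k. monom (e ((k div card (UNIV :: 'a set) ^ s) mod card (UNIV :: 'a set))) s)"

definition aprod :: "(nat \<Rightarrow> 'a::{field,finite}) \<Rightarrow> nat \<Rightarrow> 'a poly" where
  "aprod e k = (\<Prod>j<k. aseq e k - aseq e j)"

definition lambda_g :: "(nat \<Rightarrow> 'a::{field,finite}) \<Rightarrow> 'a poly \<Rightarrow> nat" where
  "lambda_g e g = (LEAST k. 0 < k \<and> g dvd aprod e k)"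

definition mu :: "(nat \<Rightarrow> 'a::{field,finite}) \<Rightarrow> 'a poly \<Rightarrow> 'a poly \<Rightarrow> nat" where
  "mu e fi g = min (card (UNIV :: 'a set) ^ degree fi) (lambda_g e g)"

definition mfalling :: "(nat \<Rightarrow> 'a::{field,finite}) \<Rightarrow> nat \<Rightarrow> (nat \<Rightarrow> nat) \<Rightarrow> 'a mpoly" where
  "mfalling e r k = (\<Prod>i<r. \<Prod>j<k i. mvar i - mconst (aseq e j))"

text \<open>Domain A/f_1 A x ... x A/f_r A via residues of degree < deg f_i (unused coordinates are 0).\<close>
definition resdom :: "nat \<Rightarrow> (nat \<Rightarrow> 'a::{field,finite} poly) \<Rightarrow> (nat \<Rightarrow> 'a poly) set" where
  "resdom r fs = {b. (\<forall>i<r. degree (b i) < degree (fs i)) \<and> (\<forall>i\<ge>r. b i = 0)}"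

definition represents :: "nat \<Rightarrow> (nat \<Rightarrow> 'a::{field,finite} poly) \<Rightarrow> 'a poly
    \<Rightarrow> ((nat \<Rightarrow> 'a poly) \<Rightarrow> 'a poly) \<Rightarrow> 'a mpoly \<Rightarrow> bool" where
  "represents r fs g f F \<longleftrightarrow> mvars F \<subseteq> {..<r} \<and>
     (\<forall>b\<in>resdom r fs. meval F b mod g = f b mod g)"

definition is_poly_fun :: "nat \<Rightarrow> (nat \<Rightarrow> 'a::{field,finite} poly) \<Rightarrow> 'a poly
    \<Rightarrow> ((nat \<Rightarrow> 'a poly) \<Rightarrow> 'a poly) \<Rightarrow> bool" where
  "is_poly_fun r fs g f \<longleftrightarrow> (\<exists>F. represents r fs g f F)"

definition kset :: "(nat \<Rightarrow> 'a::{field,finite}) \<Rightarrow> nat \<Rightarrow> (nat \<Rightarrow> 'a poly) \<Rightarrow> 'a poly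
    \<Rightarrow> (nat \<Rightarrow> nat) set" where
  "kset e r fs g = {k. (\<forall>i<r. k i < mu e (fs i) g) \<and> (\<forall>i\<ge>r. k i = 0)}"

end

theory Submission
  imports Defs "HOL-Library.Cardinality"
begin

text \<open>Every polynomial is an A-linear combination of the falling products (x)_k, since
  x_i (x)_k = (x)_(k + e_i) + a_(k_i) (x)_k. On the residue domain, (x)_k vanishes modulo g as soon
  as some k_i \<ge> \<mu>(f_i, g): either k_i \<ge> q^(deg f_i) and a_0, ..., a_(k_i - 1) exhaust the
  residues, or k_i \<ge> \<lambda>(g) and g divides prod_(j<k_i) (b - a_j), because
  prod_(j<k) (a_k - a_j) divides prod_(j<k) (b - a_j) for every b. The latter also shows that the value
  of (x)_k at every point is a multiple of P_k = prod_i prod_(j<k_i) (a_(k_i) - a_j), so the coefficient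
  b_k only matters modulo g / gcd(g, P_k); reducing it gives existence. For uniqueness, evaluate at the
  points (a_(k_1), ..., a_(k_r)): there (x)_k' vanishes whenever k'_i > k_i for some i, so the
  resulting system is triangular and each b_k is determined modulo g / gcd(g, P_k).\<close>

section \<open>Divisibility facts\<close>

lemma dvd_div_gcd_mult:
  fixes g p x :: "'b::semiring_gcd"
  assumes "p dvd x"
  shows "g dvd (g div gcd g p) * x"
proof -
  have "(g div gcd g p) * gcd g p dvd (g div gcd g p) * x"
    using assms by (intro mult_dvd_mono dvd_refl) (rule dvd_trans[OF gcd_dvd2])
  then show ?thesis by simp
qed

lemma div_gcd_dvd_if_dvd_mult:
  fixes g c p :: "'b::semiring_gcd"
  assumes g: "g \<noteq> 0" and dvd: "g dvd c * p"
  shows "g div gcd g p dvd c"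
proof -
  define d where "d = gcd g p"
  have d: "d \<noteq> 0" using g by (simp add: d_def)
  have "(g div d) * d dvd (c * (p div d)) * d"
    using dvd by (simp add: d_def mult.assoc)
  then have "g div d dvd c * (p div d)" using d by simp
  moreover have "coprime (g div d) (p div d)" using g by (simp add: d_def div_gcd_coprime)
  ultimately show ?thesis by (simp add: d_def coprime_dvd_mult_left_iff)
qed

lemma poly_eq_if_dvd_diff:
  fixes x y m :: "'b::field poly"
  assumes "m dvd x - y"
    and "x = 0 \<or> degree x < degree m" and "y = 0 \<or> degree y < degree m"
  shows "x = y"
proof (rule ccontr)
  assume "x \<noteq> y"
  then have "degree m \<le> degree (x - y)" using assms(1) by (intro dvd_imp_degree_le) auto
  moreover have "degree (x - y) \<le> max (degree x) (degree y)" by (rule degree_diff_le_max)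
  ultimately show False using assms(2,3) \<open>x \<noteq> y\<close> by auto
qed

lemma multiplicity_prod_eq_sum_card_dvd:
  fixes y :: "'b \<Rightarrow> 'c::factorial_semiring"
  assumes p: "prime p" and J: "finite J" and nz: "\<forall>j\<in>J. y j \<noteq> 0"
    and bound: "\<forall>j\<in>J. multiplicity p (y j) \<le> N"
  shows "multiplicity p (\<Prod>j\<in>J. y j) = (\<Sum>n\<in>{1..N}. card {j\<in>J. p ^ n dvd y j})"
proof -
  have "multiplicity p (\<Prod>j\<in>J. y j) = (\<Sum>j\<in>J. multiplicity p (y j))"
    using p nz J by (intro prime_elem_multiplicity_prod_distrib) auto
  also have "\<dots> = (\<Sum>j\<in>J. card {n\<in>{1..N}. p ^ n dvd y j})"
  proof (rule sum.cong)
    fix j assume j: "j \<in> J"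
    have "{n\<in>{1..N}. p ^ n dvd y j} = {1..multiplicity p (y j)}"
      using bound j nz power_dvd_iff_le_multiplicity[of "y j" p] p by (auto simp: prime_elem_not_unit)
    then show "multiplicity p (y j) = card {n\<in>{1..N}. p ^ n dvd y j}" by simp
  qed simp
  also have "\<dots> = (\<Sum>j\<in>J. \<Sum>n\<in>{1..N}. of_bool (p ^ n dvd y j))"
    by (simp add: sum.If_cases Int_def conj_commute)
  also have "\<dots> = (\<Sum>n\<in>{1..N}. card {j\<in>J. p ^ n dvd y j})"
    using J by (subst sum.swap) (simp add: sum.If_cases Int_def conj_commute)
  finally show ?thesis .
qed

section \<open>Evaluation of multivariate polynomials\<close>

definition eval_monomial :: "(nat \<Rightarrow>\<^sub>0 nat) \<Rightarrow> (nat \<Rightarrow> 'a::comm_ring_1 poly) \<Rightarrow> 'a poly" where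
  "eval_monomial m v = (\<Prod>i\<in>Poly_Mapping.keys m. v i ^ Poly_Mapping.lookup m i)"

lemma eval_monomial_superset:
  assumes "finite S" "Poly_Mapping.keys m \<subseteq> S"
  shows "eval_monomial m v = (\<Prod>i\<in>S. v i ^ Poly_Mapping.lookup m i)"
  unfolding eval_monomial_def
  by (rule prod.mono_neutral_left) (use assms in \<open>auto simp: in_keys_iff\<close>)

lemma eval_monomial_add: "eval_monomial (m + l) v = eval_monomial m v * eval_monomial l v"
proof -
  let ?S = "Poly_Mapping.keys m \<union> Poly_Mapping.keys l"
  have "eval_monomial (m + l) v = (\<Prod>i\<in>?S. v i ^ Poly_Mapping.lookup (m + l) i)"
    by (rule eval_monomial_superset) (auto dest: keys_add[THEN subsetD])
  also have "\<dots> = (\<Prod>i\<in>?S. v i ^ Poly_Mapping.lookup m i) * (\<Prod>i\<in>?S. v i ^ Poly_Mapping.lookup l i)"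
    by (simp add: lookup_add power_add prod.distrib)
  finally show ?thesis by (simp flip: eval_monomial_superset)
qed

lemma meval_eq_sum_eval_monomial:
  "meval F v = (\<Sum>m\<in>Poly_Mapping.keys F. Poly_Mapping.lookup F m * eval_monomial m v)"
  by (simp add: meval_def eval_monomial_def)

lemma meval_superset:
  assumes "finite S" "Poly_Mapping.keys F \<subseteq> S"
  shows "meval F v = (\<Sum>m\<in>S. Poly_Mapping.lookup F m * eval_monomial m v)"
  unfolding meval_eq_sum_eval_monomial
  by (rule sum.mono_neutral_left) (use assms in \<open>auto simp: in_keys_iff\<close>)

lemma meval_add: "meval (F + G) v = meval F v + meval G v"
proof -
  let ?S = "Poly_Mapping.keys F \<union> Poly_Mapping.keys G"
  have "meval (F + G) v = (\<Sum>m\<in>?S. Poly_Mapping.lookup (F + G) m * eval_monomial m v)"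
    by (rule meval_superset) (auto dest: keys_add[THEN subsetD])
  then show ?thesis
    by (simp add: meval_superset[of ?S] lookup_add distrib_right sum.distrib)
qed

lemma meval_zero [simp]: "meval 0 v = 0"
  by (simp add: meval_def)

lemma meval_one [simp]: "meval 1 v = 1"
  by (simp add: meval_eq_sum_eval_monomial eval_monomial_def)

lemma meval_uminus: "meval (- F) v = - meval F v"
  by (simp add: meval_eq_sum_eval_monomial sum_negf)

lemma meval_diff: "meval (F - G) v = meval F v - meval G v"
  using meval_add[of F "- G" v] by (simp add: meval_uminus)

lemma meval_sum: "meval (\<Sum>x\<in>A. F x) v = (\<Sum>x\<in>A. meval (F x) v)"
  by (induction A rule: infinite_finite_induct) (auto simp: meval_add)

lemma meval_single: "meval (Poly_Mapping.single m c) v = c * eval_monomial m v"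
  by (simp add: meval_eq_sum_eval_monomial)

lemma mpoly_eq_sum_single:
  "F = (\<Sum>m\<in>Poly_Mapping.keys F. Poly_Mapping.single m (Poly_Mapping.lookup F m))"
  by (rule poly_mapping_eqI) (simp add: lookup_sum lookup_single when_def sum.delta in_keys_iff)

lemma meval_mult: "meval (F * G) v = meval F v * meval G v"
proof -
  let ?s = "\<lambda>m. Poly_Mapping.single m (Poly_Mapping.lookup F m)"
  let ?t = "\<lambda>l. Poly_Mapping.single l (Poly_Mapping.lookup G l)"
  have "F * G = (\<Sum>m\<in>Poly_Mapping.keys F. \<Sum>l\<in>Poly_Mapping.keys G. ?s m * ?t l)"
    by (subst mpoly_eq_sum_single[of F], subst mpoly_eq_sum_single[of G]) (rule sum_product)
  then have "meval (F * G) v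
      = (\<Sum>m\<in>Poly_Mapping.keys F. \<Sum>l\<in>Poly_Mapping.keys G. meval (?s m) v * meval (?t l) v)"
    by (simp add: meval_sum mult_single meval_single eval_monomial_add ac_simps)
  also have "\<dots> = (\<Sum>m\<in>Poly_Mapping.keys F. meval (?s m) v) * (\<Sum>l\<in>Poly_Mapping.keys G. meval (?t l) v)"
    by (simp add: sum_product)
  also have "\<dots> = meval F v * meval G v"
    by (simp add: meval_sum[symmetric] flip: mpoly_eq_sum_single)
  finally show ?thesis .
qed

lemma meval_prod: "meval (\<Prod>x\<in>A. F x) v = (\<Prod>x\<in>A. meval (F x) v)"
  by (induction A rule: infinite_finite_induct) (auto simp: meval_mult)

lemma meval_mvar [simp]: "meval (mvar i) v = v i"
  by (simp add: mvar_def meval_single eval_monomial_def)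

lemma meval_mconst [simp]: "meval (mconst c) v = c"
  by (simp add: mconst_def meval_single eval_monomial_def)

lemma mvars_add: "mvars (F + G) \<subseteq> mvars F \<union> mvars G"
  by (auto simp: mvars_def dest!: keys_add[THEN subsetD])

lemma mvars_diff: "mvars (F - G) \<subseteq> mvars F \<union> mvars G"
  by (auto simp: mvars_def dest!: keys_diff[THEN subsetD])

lemma mvars_mult: "mvars (F * G) \<subseteq> mvars F \<union> mvars G"
  by (auto simp: mvars_def dest!: keys_mult[THEN subsetD] keys_add[THEN subsetD])

lemma mvars_sum_subset: "(\<And>x. x \<in> A \<Longrightarrow> mvars (F x) \<subseteq> S) \<Longrightarrow> mvars (\<Sum>x\<in>A. F x) \<subseteq> S"
proof (induction A rule: infinite_finite_induct)
  case (insert x A)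
  then show ?case using mvars_add[of "F x" "\<Sum>x\<in>A. F x"] by auto
qed (simp_all add: mvars_def)

lemma mvars_prod_subset: "(\<And>x. x \<in> A \<Longrightarrow> mvars (F x) \<subseteq> S) \<Longrightarrow> mvars (\<Prod>x\<in>A. F x) \<subseteq> S"
proof (induction A rule: infinite_finite_induct)
  case (insert x A)
  then show ?case using mvars_mult[of "F x" "\<Prod>x\<in>A. F x"] by auto
qed (simp_all add: mvars_def)

lemma mvars_mconst [simp]: "mvars (mconst c) = {}"
  by (simp add: mvars_def mconst_def)

lemma mvars_mvar: "mvars (mvar i) \<subseteq> {i}"
  by (simp add: mvars_def mvar_def)

section \<open>Falling products\<close>

definition falling_value ::
    "(nat \<Rightarrow> 'a::{field,finite}) \<Rightarrow> nat \<Rightarrow> (nat \<Rightarrow> nat) \<Rightarrow> (nat \<Rightarrow> 'a poly) \<Rightarrow> 'a poly" where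
  "falling_value e r k v = (\<Prod>i<r. \<Prod>j<k i. v i - aseq e j)"

definition falling_modulus :: "(nat \<Rightarrow> 'a::{field_gcd,finite}) \<Rightarrow> nat \<Rightarrow> 'a poly \<Rightarrow> (nat \<Rightarrow> nat) \<Rightarrow> 'a poly" where
  "falling_modulus e r g k = g div gcd g (\<Prod>i<r. aprod e (k i))"

lemma meval_mfalling: "meval (mfalling e r k) v = falling_value e r k v"
  by (simp add: mfalling_def falling_value_def meval_prod meval_diff)

lemma mvars_mfalling: "mvars (mfalling e r k) \<subseteq> {..<r}"
  unfolding mfalling_def
proof (intro mvars_prod_subset)
  fix i j assume "i \<in> {..<r}"
  then show "mvars (mvar i - mconst (aseq e j)) \<subseteq> {..<r}"
    using mvars_diff[of "mvar i" "mconst (aseq e j)"] mvars_mvar[of i] by auto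
qed

lemma falling_value_Suc:
  assumes "i < r"
  shows "falling_value e r (k(i := Suc (k i))) v = falling_value e r k v * (v i - aseq e (k i))"
proof -
  have split: "falling_value e r k' v = (\<Prod>j<k' i. v i - aseq e j) * (\<Prod>i'\<in>{..<r} - {i}. \<Prod>j<k' i'. v i' - aseq e j)"
    for k' using assms by (simp add: falling_value_def prod.remove)
  show ?thesis by (simp add: split[of "k(i := Suc (k i))"] split[of k] ac_simps)
qed

lemma represents_falling_sum_iff:
  "represents r fs g f (\<Sum>k\<in>K. mconst (b k) * mfalling e r k)
    \<longleftrightarrow> (\<forall>v\<in>resdom r fs. g dvd f v - (\<Sum>k\<in>K. b k * falling_value e r k v))"
proof -
  have "mvars (\<Sum>k\<in>K. mconst (b k) * mfalling e r k) \<subseteq> {..<r}"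
    using mvars_mult[of "mconst (b _)" "mfalling e r _"] mvars_mfalling[of e r]
    by (intro mvars_sum_subset) fastforce
  moreover have "x mod g = f v mod g \<longleftrightarrow> g dvd f v - x" for x v
    by (metis dvd_minus_iff minus_diff_eq mod_eq_dvd_iff)
  ultimately show ?thesis by (simp add: represents_def meval_sum meval_mult meval_mfalling)
qed

lemma falling_value_at_smaller_index:
  assumes "i < r" "k i < k' i"
  shows "falling_value e r k' (\<lambda>i. if i < r then aseq e (k i) else 0) = 0"
proof -
  have "(\<Prod>j<k' i. aseq e (k i) - aseq e j) = 0" using assms(2) by (intro prod_zero) auto
  then show ?thesis unfolding falling_value_def using assms(1) by (intro prod_zero) auto
qed

inductive falling_span :: "(nat \<Rightarrow> 'a::{field,finite}) \<Rightarrow> nat \<Rightarrow> ((nat \<Rightarrow> 'a poly) \<Rightarrow> 'a poly) \<Rightarrow> bool"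
  for e r where
  falling_term: "(\<forall>i\<ge>r. k i = 0) \<Longrightarrow> falling_span e r (\<lambda>v. c * falling_value e r k v)"
| falling_add: "falling_span e r h1 \<Longrightarrow> falling_span e r h2 \<Longrightarrow> falling_span e r (\<lambda>v. h1 v + h2 v)"

lemma falling_span_cong: "falling_span e r h \<Longrightarrow> (\<And>v. h v = h' v) \<Longrightarrow> falling_span e r h'"
  by (metis ext)

lemma falling_span_const: "falling_span e r (\<lambda>v. c)"
  using falling_term[of r "\<lambda>_. 0" e c] by (simp add: falling_value_def)

lemma falling_span_smult: "falling_span e r h \<Longrightarrow> falling_span e r (\<lambda>v. a * h v)"
proof (induction rule: falling_span.induct)
  case (falling_term k c)
  then show ?case using falling_span.falling_term[of r k e "a * c"] by (simp add: mult.assoc)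
next
  case (falling_add h1 h2)
  then have "falling_span e r (\<lambda>v. a * h1 v + a * h2 v)" by (intro falling_span.falling_add)
  then show ?case by (rule falling_span_cong) (simp add: algebra_simps)
qed

lemma falling_span_mult_var:
  assumes "falling_span e r h" "i < r"
  shows "falling_span e r (\<lambda>v. v i * h v)"
  using assms(1)
proof (induction rule: falling_span.induct)
  case (falling_term k c)
  let ?k' = "k(i := Suc (k i))"
  have "falling_span e r (\<lambda>v. c * falling_value e r ?k' v + (c * aseq e (k i)) * falling_value e r k v)"
    using falling_term assms(2) by (intro falling_span.intros) auto
  then show ?case
    by (rule falling_span_cong) (simp add: falling_value_Suc[OF assms(2)] algebra_simps)
next
  case (falling_add h1 h2)
  then have "falling_span e r (\<lambda>v. v i * h1 v + v i * h2 v)" by (intro falling_span.falling_add)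
  then show ?case by (rule falling_span_cong) (simp add: algebra_simps)
qed

lemma falling_span_sum:
  "finite A \<Longrightarrow> (\<And>x. x \<in> A \<Longrightarrow> falling_span e r (h x)) \<Longrightarrow> falling_span e r (\<lambda>v. \<Sum>x\<in>A. h x v)"
proof (induction A rule: finite_induct)
  case empty
  then show ?case using falling_span_const[of e r 0] by simp
next
  case (insert x A)
  then have "falling_span e r (\<lambda>v. h x v + (\<Sum>x\<in>A. h x v))" by (intro falling_span.falling_add) auto
  then show ?case by (rule falling_span_cong) (use insert in simp)
qed

lemma falling_span_prod_power:
  assumes "S \<subseteq> {..<r}"
  shows "falling_span e r (\<lambda>v. \<Prod>i\<in>S. v i ^ n i)"
proof -
  have "finite S" using assms finite_subset by blast
  then show ?thesis using assms
  proof (induction S rule: finite_induct)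
    case empty
    then show ?case using falling_span_const[of e r 1] by simp
  next
    case (insert i S)
    have "falling_span e r (\<lambda>v. v i ^ m * (\<Prod>i\<in>S. v i ^ n i))" for m
    proof (induction m)
      case (Suc m)
      have "falling_span e r (\<lambda>v. v i * (v i ^ m * (\<Prod>i\<in>S. v i ^ n i)))"
        using Suc insert.prems by (intro falling_span_mult_var) auto
      then show ?case by (rule falling_span_cong) (simp add: ac_simps)
    qed (use insert in simp)
    from this[of "n i"] show ?case by (rule falling_span_cong) (use insert in simp)
  qed
qed

lemma falling_span_meval:
  assumes "mvars F \<subseteq> {..<r}"
  shows "falling_span e r (meval F)"
proof -
  have "falling_span e r (\<lambda>v. Poly_Mapping.lookup F m * eval_monomial m v)"
    if "m \<in> Poly_Mapping.keys F" for m
  proof -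
    have keys: "Poly_Mapping.keys m \<subseteq> {..<r}" using that assms by (auto simp: mvars_def)
    show ?thesis
      using falling_span_smult[OF falling_span_prod_power[OF keys, where n = "Poly_Mapping.lookup m"],
          where a = "Poly_Mapping.lookup F m"]
      by (rule falling_span_cong) (simp add: eval_monomial_def)
  qed
  then have "falling_span e r (\<lambda>v. \<Sum>m\<in>Poly_Mapping.keys F. Poly_Mapping.lookup F m * eval_monomial m v)"
    by (intro falling_span_sum) simp_all
  then show ?thesis by (simp add: meval_eq_sum_eval_monomial[abs_def])
qed

section \<open>The enumeration of A\<close>

locale field_enumeration =
  fixes e :: "nat \<Rightarrow> 'a::{field_gcd,finite}"
  assumes enum: "bij_betw e {..<CARD('a)} UNIV" and e0: "e 0 = 0"
begin

lemma card_ge_2: "2 \<le> CARD('a)"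
proof -
  have "card {0::'a, 1} \<le> CARD('a)" by (rule card_mono) auto
  then show ?thesis by simp
qed

lemma coeff_aseq: "coeff (aseq e k) s = e ((k div CARD('a) ^ s) mod CARD('a))"
proof (cases "s \<le> k")
  case False
  have "k < 2 ^ s" using False less_exp[of s] by linarith
  also have "\<dots> \<le> CARD('a) ^ s" using card_ge_2 by (simp add: power_mono)
  finally show ?thesis using False
    by (simp add: aseq_def coeff_sum coeff_monom e0)
qed (simp add: aseq_def coeff_sum coeff_monom)

lemma aseq_pCons: "aseq e n = pCons (e (n mod CARD('a))) (aseq e (n div CARD('a)))"
  by (rule poly_eqI) (simp add: coeff_pCons coeff_aseq div_mult2_eq split: nat.split)

lemma aseq_0 [simp]: "aseq e 0 = 0"
  by (rule poly_eqI) (simp add: coeff_aseq e0)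

lemma aseq_add_mult: "i < CARD('a) \<Longrightarrow> aseq e (i + CARD('a) * j) = pCons (e i) (aseq e j)"
  using card_ge_2 by (subst aseq_pCons) simp

lemma aseq_split:
  assumes "i < CARD('a) ^ m"
  shows "aseq e (N * CARD('a) ^ m + i) = monom 1 m * aseq e N + aseq e i"
  using assms
proof (induction m arbitrary: i)
  case 0 then show ?case by simp
next
  case (Suc m)
  have q: "0 < CARD('a)" using card_ge_2 by simp
  have "i div CARD('a) < CARD('a) ^ m" using Suc.prems by (simp add: div_less_iff_less_mult mult.commute)
  moreover have "N * CARD('a) ^ Suc m + i = i mod CARD('a) + CARD('a) * (N * CARD('a) ^ m + i div CARD('a))"
    by (simp add: algebra_simps)
  ultimately have "aseq e (N * CARD('a) ^ Suc m + i)
      = pCons (e (i mod CARD('a))) (monom 1 m * aseq e N + aseq e (i div CARD('a)))"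
    using Suc.IH q by (simp add: aseq_add_mult)
  also have "\<dots> = monom 1 (Suc m) * aseq e N + aseq e i"
    by (subst (2) aseq_pCons) (simp add: monom_Suc)
  finally show ?case .
qed


lemma coeff_aseq_eq_0:
  assumes "n < CARD('a) ^ d" "d \<le> s"
  shows "coeff (aseq e n) s = 0"
proof -
  have "CARD('a) ^ d \<le> CARD('a) ^ s" using assms(2) card_ge_2 by (simp add: power_increasing)
  then show ?thesis using assms(1) by (simp add: coeff_aseq e0)
qed

lemma degree_aseq_less: "n < CARD('a) ^ d \<Longrightarrow> 0 < d \<Longrightarrow> degree (aseq e n) < d"
  using degree_le[of "d - 1" "aseq e n"] coeff_aseq_eq_0[of n d] by fastforce

lemma aseq_surj: "\<forall>s\<ge>d. coeff p s = 0 \<Longrightarrow> \<exists>j<CARD('a) ^ d. aseq e j = p"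
proof (induction d arbitrary: p)
  case 0
  then have "p = 0" by (simp add: poly_eq_iff)
  then show ?case by auto
next
  case (Suc d)
  obtain a p' where p: "p = pCons a p'" by (cases p)
  have "\<forall>s\<ge>d. coeff p' s = 0"
    using Suc.prems p by (metis coeff_pCons_Suc Suc_le_mono)
  then obtain j where j: "j < CARD('a) ^ d" "aseq e j = p'" using Suc.IH by blast
  obtain i where i: "i < CARD('a)" "e i = a"
    using enum unfolding bij_betw_def by (metis UNIV_I imageE lessThan_iff)
  have "i + CARD('a) * j < CARD('a) * (j + 1)" using i by simp
  also have "\<dots> \<le> CARD('a) ^ Suc d" using j by (simp del: mult_Suc_right)
  finally show ?case using i j p by (intro exI[of _ "i + CARD('a) * j"]) (simp add: aseq_add_mult)
qed

lemma aseq_inj: "aseq e n = aseq e n' \<Longrightarrow> n = n'"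
proof (induction "n + n'" arbitrary: n n' rule: less_induct)
  case less
  have q: "1 < CARD('a)" using card_ge_2 by simp
  show ?case
  proof (cases "n + n' = 0")
    case False
    have "x div CARD('a) < x" if "0 < x" for x using q that by simp
    then have "n div CARD('a) + n' div CARD('a) < n + n'"
      using False div_le_dividend[of n "CARD('a)"] div_le_dividend[of n' "CARD('a)"]
      by (metis add_less_le_mono add_le_less_mono add_is_0 bot_nat_0.not_eq_extremum)
    moreover have "e (n mod CARD('a)) = e (n' mod CARD('a))"
      "aseq e (n div CARD('a)) = aseq e (n' div CARD('a))"
      using less.prems aseq_pCons[of n] aseq_pCons[of n'] by simp_all
    moreover have "inj_on e {..<CARD('a)}" using enum by (simp add: bij_betw_def)
    ultimately have "n mod CARD('a) = n' mod CARD('a)" "n div CARD('a) = n' div CARD('a)"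
      using less.hyps q by (auto dest: inj_onD)
    then show ?thesis by (metis div_mult_mod_eq)
  qed simp
qed

lemma aseq_divmod:
  "aseq e n = monom 1 m * aseq e (n div CARD('a) ^ m) + aseq e (n mod CARD('a) ^ m)"
  using aseq_split[of "n mod CARD('a) ^ m" m "n div CARD('a) ^ m"] card_ge_2 by (simp add: div_mult_mod_eq)


lemma aseq_dvd_diff_imp_eq:
  assumes M: "M \<noteq> 0" and i: "i < CARD('a) ^ degree M" "i' < CARD('a) ^ degree M"
    and dvd: "M dvd aseq e i - aseq e i'"
  shows "i = i'"
proof (rule ccontr)
  assume "i \<noteq> i'"
  then have nz: "aseq e i - aseq e i' \<noteq> 0" using aseq_inj by auto
  have "degree M \<le> degree (aseq e i - aseq e i')" using dvd nz by (rule dvd_imp_degree_le)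
  then have "coeff (aseq e i - aseq e i') (degree (aseq e i - aseq e i')) = 0"
    using i coeff_aseq_eq_0 by (simp only: coeff_diff) simp
  then show False using nz leading_coeff_0_iff by blast
qed

lemma card_dvd_diff_aseq_upper:
  assumes M: "M \<noteq> 0"
  shows "card {j\<in>{..<k}. M dvd aseq e k - aseq e j} \<le> k div CARD('a) ^ degree M"
proof -
  define Q where "Q = CARD('a) ^ degree M"
  define S where "S = {j\<in>{..<k}. M dvd aseq e k - aseq e j}"
  have Q0: "0 < Q" using card_ge_2 by (simp add: Q_def)
  have split: "aseq e j = monom 1 (degree M) * aseq e (j div Q) + aseq e (j mod Q)" for j
    using aseq_divmod by (simp add: Q_def)
  have low_eq: "i mod Q = i' mod Q" if "M dvd aseq e (i mod Q) - aseq e (i' mod Q)" for i i'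
    using aseq_dvd_diff_imp_eq[OF M _ _ that] Q0 by (simp add: Q_def)
  have "card S \<le> card {..<k div Q}"
  proof (rule card_inj_on_le[where f = "\<lambda>j. j div Q"])
    show "inj_on (\<lambda>j. j div Q) S"
    proof (rule inj_onI)
      fix j j' assume j: "j \<in> S" "j' \<in> S" and eq: "j div Q = j' div Q"
      have "M dvd (aseq e k - aseq e j) - (aseq e k - aseq e j')"
        using j dvd_diff[of M "aseq e k - aseq e j" "aseq e k - aseq e j'"] by (simp add: S_def)
      then have "M dvd aseq e (j' mod Q) - aseq e (j mod Q)"
        using split[of j] split[of j'] eq by simp
      then show "j = j'" using low_eq eq by (metis div_mult_mod_eq)
    qed
    show "(\<lambda>j. j div Q) ` S \<subseteq> {..<k div Q}"
    proof (rule image_subsetI)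
      fix j assume j: "j \<in> S"
      then have "j div Q \<le> k div Q" by (simp add: S_def div_le_mono)
      moreover have "j div Q \<noteq> k div Q"
      proof
        assume jk: "j div Q = k div Q"
        then have "j mod Q < k mod Q" using j by (simp add: S_def) (metis add_less_cancel_left div_mult_mod_eq)
        moreover have "M dvd aseq e (k mod Q) - aseq e (j mod Q)"
          using j split[of j] split[of k] jk by (simp add: S_def)
        ultimately show False using low_eq by fastforce
      qed
      ultimately show "j div Q \<in> {..<k div Q}" by simp
    qed
  qed (simp add: S_def)
  then show ?thesis by (simp add: S_def Q_def)
qed

lemma card_dvd_diff_aseq_lower:
  assumes M: "M \<noteq> 0"
  shows "k div CARD('a) ^ degree M \<le> card {j\<in>{..<k}. M dvd a - aseq e j}"
proof -
  define Q where "Q = CARD('a) ^ degree M"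
  have Q0: "0 < Q" using card_ge_2 by (simp add: Q_def)
  \<comment> \<open>every block [N Q, (N + 1) Q) of indices contains a representative of a modulo M\<close>
  have "\<exists>i<Q. M dvd a - aseq e (N * Q + i)" for N
  proof -
    define x where "x = a - monom 1 (degree M) * aseq e N"
    have "\<forall>s\<ge>degree M. coeff (x mod M) s = 0"
      using degree_mod_less[OF M, of x] by (auto intro: coeff_eq_0)
    then obtain i where i: "i < Q" "aseq e i = x mod M" using aseq_surj unfolding Q_def by blast
    then have "a - aseq e (N * Q + i) = x - x mod M"
      using aseq_split[of i "degree M" N] by (simp add: Q_def x_def)
    then show ?thesis using i by (metis mod_eq_dvd_iff mod_mod_trivial)
  qed
  then obtain \<phi> where \<phi>: "\<And>N. \<phi> N < Q \<and> M dvd a - aseq e (N * Q + \<phi> N)" by metis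
  have "card {..<k div Q} \<le> card {j\<in>{..<k}. M dvd a - aseq e j}"
  proof (rule card_inj_on_le[where f = "\<lambda>N. N * Q + \<phi> N"])
    show "inj_on (\<lambda>N. N * Q + \<phi> N) {..<k div Q}"
    proof (rule inj_onI)
      fix N N' assume "N * Q + \<phi> N = N' * Q + \<phi> N'"
      then have "(N * Q + \<phi> N) div Q = (N' * Q + \<phi> N') div Q" by simp
      then show "N = N'" using \<phi>[of N] \<phi>[of N'] Q0 by simp
    qed
    show "(\<lambda>N. N * Q + \<phi> N) ` {..<k div Q} \<subseteq> {j\<in>{..<k}. M dvd a - aseq e j}"
    proof (rule image_subsetI)
      fix N assume "N \<in> {..<k div Q}"
      then have "N * Q + \<phi> N < (k div Q) * Q" using \<phi>[of N]
        by (metis add_less_cancel_left lessThan_iff less_le_trans mult_Suc mult_le_mono1 Suc_leI add.commute)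
      also have "\<dots> \<le> k" by simp
      finally show "N * Q + \<phi> N \<in> {j\<in>{..<k}. M dvd a - aseq e j}" using \<phi>[of N] by simp
    qed
  qed simp
  then show ?thesis by (simp add: Q_def)
qed



text \<open>The analogue of k! dividing any product of k consecutive integers: for every prime power M,
  at least as many of the factors a - a_j (j < k) as of the factors a_k - a_j are divisible by M.\<close>

lemma aprod_dvd_prod_diff_aseq: "aprod e k dvd (\<Prod>j<k. a - aseq e j)"
proof (cases "\<exists>j<k. a = aseq e j")
  case True
  then have "(\<Prod>j<k. a - aseq e j) = 0" by (auto intro: prod_zero)
  then show ?thesis by (metis dvd_0_right)
next
  case False
  have nz_a: "\<forall>j\<in>{..<k}. a - aseq e j \<noteq> 0" using False by auto
  have nz_k: "\<forall>j\<in>{..<k}. aseq e k - aseq e j \<noteq> 0" using aseq_inj by fastforce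
  show ?thesis unfolding aprod_def
  proof (rule multiplicity_le_imp_dvd)
    show "(\<Prod>j<k. aseq e k - aseq e j) \<noteq> 0" using nz_k by simp
    fix p :: "'a poly" assume p: "prime p"
    define N where "N = (\<Sum>j<k. multiplicity p (aseq e k - aseq e j) + multiplicity p (a - aseq e j))"
    have bound: "multiplicity p (aseq e k - aseq e j) \<le> N" "multiplicity p (a - aseq e j) \<le> N"
      if "j < k" for j
      using that member_le_sum[of j "{..<k}" "\<lambda>j. multiplicity p (aseq e k - aseq e j) + multiplicity p (a - aseq e j)"]
      unfolding N_def by auto
    have pn: "p ^ n \<noteq> 0" for n using p by auto
    have "multiplicity p (\<Prod>j<k. aseq e k - aseq e j)
        = (\<Sum>n\<in>{1..N}. card {j\<in>{..<k}. p ^ n dvd aseq e k - aseq e j})"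
      using p nz_k bound by (intro multiplicity_prod_eq_sum_card_dvd) auto
    also have "\<dots> \<le> (\<Sum>n\<in>{1..N}. card {j\<in>{..<k}. p ^ n dvd a - aseq e j})"
      using card_dvd_diff_aseq_upper[OF pn] card_dvd_diff_aseq_lower[OF pn]
      by (intro sum_mono) (meson le_trans)
    also have "\<dots> = multiplicity p (\<Prod>j<k. a - aseq e j)"
      using p nz_a bound by (intro multiplicity_prod_eq_sum_card_dvd[symmetric]) auto
    finally show "multiplicity p (\<Prod>j<k. aseq e k - aseq e j) \<le> multiplicity p (\<Prod>j<k. a - aseq e j)" .
  qed
qed


lemma lambda_g_dvd:
  assumes g: "g \<noteq> 0"
  shows "g dvd aprod e (lambda_g e g)"
proof -
  define k where "k = CARD('a) ^ degree g"
  have "\<exists>k>0. g dvd aprod e k"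
  proof (intro exI conjI)
    show "0 < k" using card_ge_2 by (simp add: k_def)
    \<comment> \<open>the remainder of a_k modulo g is some a_j with j < k\<close>
    have "\<forall>s\<ge>degree g. coeff (aseq e k mod g) s = 0"
      using degree_mod_less[OF g, of "aseq e k"] by (auto intro: coeff_eq_0)
    then obtain j where j: "j < k" "aseq e j = aseq e k mod g" using aseq_surj unfolding k_def by blast
    have "g dvd aseq e k - aseq e j" using j(2) by (simp add: mod_eq_dvd_iff[symmetric])
    also have "\<dots> dvd aprod e k" unfolding aprod_def using j(1) by (intro dvd_prodI) auto
    finally show "g dvd aprod e k" .
  qed
  then show ?thesis unfolding lambda_g_def by (rule LeastI2_ex) simp
qed

lemma dvd_prod_diff_aseq_if_lambda_le:
  assumes "g \<noteq> 0" "lambda_g e g \<le> k"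
  shows "g dvd (\<Prod>j<k. x - aseq e j)"
proof -
  have "g dvd aprod e (lambda_g e g)" using assms(1) by (rule lambda_g_dvd)
  also have "\<dots> dvd (\<Prod>j<lambda_g e g. x - aseq e j)" by (rule aprod_dvd_prod_diff_aseq)
  also have "\<dots> dvd (\<Prod>j<k. x - aseq e j)" using assms(2) by (intro prod_dvd_prod_subset) auto
  finally show ?thesis .
qed

lemma prod_diff_aseq_eq_0:
  assumes "degree x < d" "CARD('a) ^ d \<le> k"
  shows "(\<Prod>j<k. x - aseq e j) = 0"
proof -
  have "\<forall>s\<ge>d. coeff x s = 0" using assms(1) by (auto intro: coeff_eq_0)
  then obtain j where j: "j < CARD('a) ^ d" "aseq e j = x" using aseq_surj by blast
  have "j \<in> {..<k}" using j(1) assms(2) by simp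
  moreover have "x - aseq e j = 0" using j(2) by simp
  ultimately show ?thesis by (intro prod_zero) blast+
qed

section \<open>Representations modulo g\<close>

lemma falling_value_dvd: "(\<Prod>i<r. aprod e (k i)) dvd falling_value e r k v"
  unfolding falling_value_def by (intro prod_dvd_prod aprod_dvd_prod_diff_aseq)

lemma falling_value_notin_kset:
  assumes g: "g \<noteq> 0" and v: "v \<in> resdom r fs"
    and k: "\<forall>i\<ge>r. k i = 0" "k \<notin> kset e r fs g"
  shows "g dvd falling_value e r k v"
proof -
  obtain i where i: "i < r" "\<not> k i < mu e (fs i) g" using k by (auto simp: kset_def)
  have "g dvd (\<Prod>j<k i. v i - aseq e j)"
  proof (cases "CARD('a) ^ degree (fs i) \<le> k i")
    case True
    have "degree (v i) < degree (fs i)" using v i by (simp add: resdom_def)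
    then show ?thesis using True by (simp add: prod_diff_aseq_eq_0)
  next
    case False
    then show ?thesis using i g by (intro dvd_prod_diff_aseq_if_lambda_le) (auto simp: mu_def)
  qed
  also have "\<dots> dvd falling_value e r k v" unfolding falling_value_def using i by (intro dvd_prodI) auto
  finally show ?thesis .
qed

lemma finite_kset: "finite (kset e r fs g)"
proof (rule finite_subset)
  define B where "B = (\<Sum>i<r. mu e (fs i) g)"
  show "kset e r fs g \<subseteq> {k. \<forall>i. (i \<in> {..<r} \<longrightarrow> k i \<in> {..<B}) \<and> (i \<notin> {..<r} \<longrightarrow> k i = 0)}"
  proof
    fix k assume k: "k \<in> kset e r fs g"
    have "k i < B" if "i < r" for i
    proof -
      have "k i < mu e (fs i) g" using k that by (simp add: kset_def)
      also have "\<dots> \<le> B" unfolding B_def using that by (intro member_le_sum) auto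
      finally show ?thesis .
    qed
    then show "k \<in> {k. \<forall>i. (i \<in> {..<r} \<longrightarrow> k i \<in> {..<B}) \<and> (i \<notin> {..<r} \<longrightarrow> k i = 0)}"
      using k by (simp add: kset_def)
  qed
  show "finite {k. \<forall>i. (i \<in> {..<r} \<longrightarrow> k i \<in> {..<B}) \<and> (i \<notin> {..<r} \<longrightarrow> k i = (0::nat))}"
    by (rule finite_set_of_finite_funs) auto
qed

lemma falling_span_reduce_kset:
  assumes g: "g \<noteq> 0" and h: "falling_span e r h"
  shows "\<exists>c. \<forall>v\<in>resdom r fs. g dvd h v - (\<Sum>k\<in>kset e r fs g. c k * falling_value e r k v)"
  using h
proof (induction rule: falling_span.induct)
  case (falling_term k c)
  show ?case
  proof (cases "k \<in> kset e r fs g")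
    case True
    have "(\<Sum>k'\<in>kset e r fs g. (if k' = k then c else 0) * falling_value e r k' v) = c * falling_value e r k v"
      for v using True finite_kset by (simp add: sum.delta' if_distrib[of "\<lambda>x. x * _"] cong: if_cong)
    then show ?thesis by (intro exI[of _ "\<lambda>k'. if k' = k then c else 0"]) simp
  next
    case False
    then show ?thesis using falling_value_notin_kset[OF g _ falling_term] by (intro exI[of _ "\<lambda>_. 0"]) simp
  qed
next
  case (falling_add h1 h2)
  then obtain c1 c2 where c1: "\<forall>v\<in>resdom r fs. g dvd h1 v - (\<Sum>k\<in>kset e r fs g. c1 k * falling_value e r k v)"
    and c2: "\<forall>v\<in>resdom r fs. g dvd h2 v - (\<Sum>k\<in>kset e r fs g. c2 k * falling_value e r k v)"
    by blast
  show ?case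
  proof (intro exI ballI)
    fix v assume v: "v \<in> resdom r fs"
    have "g dvd (h1 v - (\<Sum>k\<in>kset e r fs g. c1 k * falling_value e r k v))
          + (h2 v - (\<Sum>k\<in>kset e r fs g. c2 k * falling_value e r k v))"
      using c1 c2 v by (intro dvd_add) auto
    then show "g dvd h1 v + h2 v - (\<Sum>k\<in>kset e r fs g. (c1 k + c2 k) * falling_value e r k v)"
      by (simp add: distrib_right sum.distrib algebra_simps)
  qed
qed

lemma falling_value_at_index:
  "falling_value e r k (\<lambda>i. if i < r then aseq e (k i) else 0) = (\<Prod>i<r. aprod e (k i))"
  unfolding falling_value_def aprod_def by (intro prod.cong) auto

lemma dvd_falling_modulus_coeff:
  assumes g: "g \<noteq> 0" and fs: "\<forall>i<r. 0 < degree (fs i)"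
    and vanish: "\<forall>v\<in>resdom r fs. g dvd (\<Sum>k\<in>kset e r fs g. c k * falling_value e r k v)"
  shows "k \<in> kset e r fs g \<Longrightarrow> falling_modulus e r g k dvd c k"
proof (induction "\<Sum>i<r. k i" arbitrary: k rule: less_induct)
  case less
  define K where "K = kset e r fs g"
  define v where "v = (\<lambda>i. if i < r then aseq e (k i) else 0)"
  have k: "k \<in> K" using less.prems by (simp add: K_def)
  have v: "v \<in> resdom r fs"
    using k fs degree_aseq_less by (auto simp: resdom_def kset_def mu_def v_def K_def)
  have others: "g dvd c k' * falling_value e r k' v" if k': "k' \<in> K - {k}" for k'
  proof (cases "\<forall>i<r. k' i \<le> k i")
    case True
    obtain i where i: "i < r" "k' i \<noteq> k i"
      using k k' by (auto simp: K_def kset_def fun_eq_iff) (metis not_le)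
    then have "(\<Sum>i<r. k' i) < (\<Sum>i<r. k i)"
      using True by (intro sum_strict_mono_ex1) (auto intro!: bexI[of _ i] simp: order.strict_iff_order)
    then have "falling_modulus e r g k' dvd c k'" using less.hyps k' by (simp add: K_def)
    moreover have "g dvd falling_modulus e r g k' * falling_value e r k' v"
      unfolding falling_modulus_def by (intro dvd_div_gcd_mult falling_value_dvd)
    ultimately show ?thesis by (meson dvd_trans mult_dvd_mono dvd_refl)
  next
    case False
    then obtain i where "i < r" "k i < k' i" by (auto simp: not_le)
    then have "falling_value e r k' v = 0" unfolding v_def by (rule falling_value_at_smaller_index)
    then show ?thesis by simp
  qed
  have "(\<Sum>k'\<in>K. c k' * falling_value e r k' v)
      = c k * falling_value e r k v + (\<Sum>k'\<in>K - {k}. c k' * falling_value e r k' v)"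
    using k finite_kset by (simp add: K_def sum.remove)
  moreover have "g dvd (\<Sum>k'\<in>K - {k}. c k' * falling_value e r k' v)" using others by (rule dvd_sum)
  moreover have "g dvd (\<Sum>k'\<in>K. c k' * falling_value e r k' v)" using vanish v by (simp add: K_def)
  ultimately have "g dvd c k * falling_value e r k v" by (simp add: dvd_add_left_iff)
  then have "g dvd c k * (\<Prod>i<r. aprod e (k i))" by (simp add: v_def falling_value_at_index)
  then show ?case unfolding falling_modulus_def by (rule div_gcd_dvd_if_dvd_mult[OF g])
qed

lemma reduced_falling_coeffs_exist:
  assumes g: "g \<noteq> 0" and pf: "is_poly_fun r fs g f"
  shows "\<exists>b. (\<forall>k\<in>kset e r fs g. b k = 0 \<or> degree (b k) < degree (falling_modulus e r g k))
           \<and> (\<forall>v\<in>resdom r fs. g dvd f v - (\<Sum>k\<in>kset e r fs g. b k * falling_value e r k v))"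
proof -
  define K where "K = kset e r fs g"
  obtain F where F: "represents r fs g f F" using pf by (auto simp: is_poly_fun_def)
  then have "falling_span e r (meval F)" by (intro falling_span_meval) (simp add: represents_def)
  from falling_span_reduce_kset[OF g this, where fs = fs]
  obtain c where c: "\<forall>v\<in>resdom r fs. g dvd meval F v - (\<Sum>k\<in>K. c k * falling_value e r k v)"
    by (auto simp: K_def)
  define b where "b k = c k mod falling_modulus e r g k" for k
  have "g dvd f v - (\<Sum>k\<in>K. b k * falling_value e r k v)" if v: "v \<in> resdom r fs" for v
  proof -
    \<comment> \<open>c k and b k differ by a multiple of the modulus, which kills the k-th term modulo g\<close>
    have "g dvd (c k - b k) * falling_value e r k v" for k
    proof -
      have "c k - b k = c k div falling_modulus e r g k * falling_modulus e r g k"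
        by (simp add: b_def minus_mod_eq_div_mult)
      moreover have "g dvd falling_modulus e r g k * falling_value e r k v"
        unfolding falling_modulus_def by (intro dvd_div_gcd_mult falling_value_dvd)
      ultimately show ?thesis by (simp add: mult.assoc)
    qed
    then have "g dvd (\<Sum>k\<in>K. (c k - b k) * falling_value e r k v)" by (intro dvd_sum)
    moreover have "g dvd meval F v - f v" using F v by (simp add: represents_def mod_eq_dvd_iff)
    then have "g dvd f v - meval F v" by (metis dvd_minus_iff minus_diff_eq)
    ultimately have "g dvd (f v - meval F v) + (meval F v - (\<Sum>k\<in>K. c k * falling_value e r k v))
        + (\<Sum>k\<in>K. (c k - b k) * falling_value e r k v)"
      using c v by (intro dvd_add) auto
    then show ?thesis by (simp add: algebra_simps sum_subtractf)
  qed
  moreover have "b k = 0 \<or> degree (b k) < degree (falling_modulus e r g k)" for k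
    unfolding b_def falling_modulus_def
    by (rule degree_mod_less) (metis dvd_div_mult_self gcd_dvd1 g mult_zero_left)
  ultimately show ?thesis by (auto simp: K_def)
qed

lemma reduced_falling_coeffs_unique:
  assumes g: "g \<noteq> 0" and fs: "\<forall>i<r. 0 < degree (fs i)"
    and b1: "\<forall>k\<in>kset e r fs g. b1 k = 0 \<or> degree (b1 k) < degree (falling_modulus e r g k)"
    and b2: "\<forall>k\<in>kset e r fs g. b2 k = 0 \<or> degree (b2 k) < degree (falling_modulus e r g k)"
    and agree: "\<forall>v\<in>resdom r fs. g dvd (\<Sum>k\<in>kset e r fs g. b1 k * falling_value e r k v)
                                    - (\<Sum>k\<in>kset e r fs g. b2 k * falling_value e r k v)"
    and k: "k \<in> kset e r fs g"
  shows "b1 k = b2 k"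
proof (rule poly_eq_if_dvd_diff)
  show "falling_modulus e r g k dvd b1 k - b2 k"
    using agree k by (intro dvd_falling_modulus_coeff[OF g fs]) (simp_all add: algebra_simps sum_subtractf)
qed (use b1 b2 k in auto)

lemma represents_reduced_falling_sum_unique:
  assumes g: "g \<noteq> 0" and fs: "\<forall>i<r. 0 < degree (fs i)"
    and b1: "\<forall>k\<in>kset e r fs g. b1 k = 0 \<or> degree (b1 k) < degree (falling_modulus e r g k)"
    and b2: "\<forall>k\<in>kset e r fs g. b2 k = 0 \<or> degree (b2 k) < degree (falling_modulus e r g k)"
    and rep1: "represents r fs g f (\<Sum>k\<in>kset e r fs g. mconst (b1 k) * mfalling e r k)"
    and rep2: "represents r fs g f (\<Sum>k\<in>kset e r fs g. mconst (b2 k) * mfalling e r k)"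
  shows "(\<Sum>k\<in>kset e r fs g. mconst (b1 k) * mfalling e r k) = (\<Sum>k\<in>kset e r fs g. mconst (b2 k) * mfalling e r k)"
proof (rule sum.cong)
  fix k assume k: "k \<in> kset e r fs g"
  have "g dvd (\<Sum>k\<in>kset e r fs g. b1 k * falling_value e r k v)
              - (\<Sum>k\<in>kset e r fs g. b2 k * falling_value e r k v)" if v: "v \<in> resdom r fs" for v
  proof -
    have "g dvd (f v - (\<Sum>k\<in>kset e r fs g. b2 k * falling_value e r k v))
                - (f v - (\<Sum>k\<in>kset e r fs g. b1 k * falling_value e r k v))"
      using rep1 rep2 v unfolding represents_falling_sum_iff by (blast intro: dvd_diff)
    then show ?thesis by simp
  qed
  then have "b1 k = b2 k" using reduced_falling_coeffs_unique[OF g fs b1 b2 _ k] by blast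
  then show "mconst (b1 k) * mfalling e r k = mconst (b2 k) * mfalling e r k" by simp
qed simp

end

theorem mainTheorem7:
  fixes e :: "nat \<Rightarrow> 'a::{field_gcd,finite}"
    and r :: nat
    and fs :: "nat \<Rightarrow> 'a poly"
    and g :: "'a poly"
    and f :: "(nat \<Rightarrow> 'a poly) \<Rightarrow> 'a poly"
  assumes enum: "bij_betw e {..<card (UNIV :: 'a set)} UNIV" and e0: "e 0 = 0"
    and fs_nc: "\<forall>i<r. 0 < degree (fs i)"
    and g_nc: "0 < degree g"
    and pf: "is_poly_fun r fs g f"
  shows "\<exists>!F. (\<exists>b. F = (\<Sum>k\<in>kset e r fs g. mconst (b k) * mfalling e r k) \<and>
              (\<forall>k\<in>kset e r fs g. b k = 0 \<or>
                 degree (b k) < degree (g div gcd g (\<Prod>i<r. aprod e (k i)))))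
            \<and> represents r fs g f F"
proof -
  interpret field_enumeration e using enum e0 by unfold_locales
  have g: "g \<noteq> 0" using g_nc by auto
  let ?F = "\<lambda>b. \<Sum>k\<in>kset e r fs g. mconst (b k) * mfalling e r k"
  let ?reduced = "\<lambda>b. \<forall>k\<in>kset e r fs g. b k = 0 \<or> degree (b k) < degree (falling_modulus e r g k)"
  obtain b where b: "?reduced b" "represents r fs g f (?F b)"
    using reduced_falling_coeffs_exist[OF g pf] by (auto simp: represents_falling_sum_iff)
  show ?thesis unfolding falling_modulus_def[symmetric]
  proof (rule ex1I[of _ "?F b"])
    show "(\<exists>b'. ?F b = ?F b' \<and> ?reduced b') \<and> represents r fs g f (?F b)" using b by blast
  next
    fix F assume "(\<exists>b'. F = ?F b' \<and> ?reduced b') \<and> represents r fs g f F"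
    then obtain b' where "F = ?F b'" "?reduced b'" "represents r fs g f (?F b')" by blast
    then show "F = ?F b" using represents_reduced_falling_sum_unique[OF g fs_nc _ b(1) _ b(2)] by blast
  qed
qed

end
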